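(* Let $\mathbf L\in\mathbb R^{N\times N}$ be a Laplacian matrix (symmetric, off-diagonal entries $\le0$, $\mathbf L\mathbf 1_N=\mathbf 0$) with second-smallest eigenvalue $\rho_2>0$, and $\hat{\mathbf L}=\mathbf L\otimes\mathbf I_d$. Let $\mathbf A\in\mathbb R^{Nd\times Nd}$ be symmetric with all eigenvalues in $[\mu,L]$, $0<\mu\le L$, let $U>0$ and $\mathbf B=\mathbf A+U\hat{\mathbf L}$. Then for every $\mathbf v\in\mathbb R^{Nd}$ orthogonal to the column space of $\mathbf 1_N\otimes\mathbf I_d$ (i.e., $(\mathbf 1_N\otimes\mathbf I_d)^\top\mathbf v=\mathbf 0$), $$\|\mathbf B^{-1}\mathbf v\|\le\frac1U\cdot\frac{L}{\mu\rho_2}\|\mathbf v\|.$$ *)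

theory Defs
  imports "Jordan_Normal_Form.Jordan_Normal_Form" "Jordan_Normal_Form.Gauss_Jordan_Elimination"
begin

text \<open>Kronecker product with identity, using the index convention
  (i, a) \<mapsto> i * d + a (i < N, a < d).\<close>
definition kron_id :: "real mat \<Rightarrow> nat \<Rightarrow> real mat" where
  "kron_id M d = mat (dim_row M * d) (dim_col M * d)
     (\<lambda>(i, j). if i mod d = j mod d then M $$ (i div d, j div d) else 0)"

definition ones_kron_id :: "nat \<Rightarrow> nat \<Rightarrow> real mat" where
  "ones_kron_id N d = mat (N * d) d (\<lambda>(i, a). if i mod d = a then 1 else 0)"

definition laplacian_mat :: "nat \<Rightarrow> real mat \<Rightarrow> bool" where
  "laplacian_mat N M \<longleftrightarrow> M \<in> carrier_mat N N \<and> transpose_mat M = M \<and>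
     (\<forall>i<N. \<forall>j<N. i \<noteq> j \<longrightarrow> M $$ (i, j) \<le> 0) \<and>
     M *\<^sub>v (vec N (\<lambda>_. 1)) = 0\<^sub>v N"

definition sorted_eigenvalues :: "real mat \<Rightarrow> real list" where
  "sorted_eigenvalues M = sorted_list_of_multiset (proots (char_poly M))"

definition euclid_norm :: "real vec \<Rightarrow> real" where
  "euclid_norm v = sqrt (v \<bullet> v)"

end

theory Submission
  imports Defs "Jordan_Normal_Form.Schur_Decomposition"
begin

text \<open>Write w = B^-1 v and split w = p + c, where c is the agent-wise average of w, so that
  K c = 0 for K = L \<otimes> I_d, v \<bullet> c = 0, and every coordinate slice of p is orthogonal to 1_N.
  Pairing B w = v with w gives U \<rho>2 |p|^2 \<le> w \<bullet> A w + U (p \<bullet> K p) = v \<bullet> p \<le> |v| |p|, so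
  |p| \<le> |v| / (U \<rho>2). Pairing it with c gives c \<bullet> A w = 0, hence
  \<mu> |w|^2 \<le> w \<bullet> A w = p \<bullet> A p - c \<bullet> A c \<le> L |p|^2 and |w| \<le> sqrt (L / \<mu>) |v| / (U \<rho>2),
  which is at most the claimed bound as L / \<mu> \<ge> 1. The eigenvalue bounds on the quadratic forms
  come from the spectral theorem for real symmetric matrices.\<close>

section \<open>Spectral theorem for real symmetric matrices\<close>

lemma scalar_prod_self_nonneg: "0 \<le> (x :: real vec) \<bullet> x"
  using conjugate_square_ge_0_vec[of x] by simp

lemma scalar_prod_self_eq_0_iff:
  "(x :: real vec) \<in> carrier_vec n \<Longrightarrow> x \<bullet> x = 0 \<longleftrightarrow> x = 0\<^sub>v n"
  using conjugate_square_eq_0_vec[of x n] by simp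

lemma symmetric_mat_scalar_prod:
  fixes A :: "'a :: comm_semiring_0 mat"
  assumes A: "A \<in> carrier_mat n n" and sym: "transpose_mat A = A"
    and x: "x \<in> carrier_vec n" and y: "y \<in> carrier_vec n"
  shows "x \<bullet> (A *\<^sub>v y) = (A *\<^sub>v x) \<bullet> y"
  using transpose_vec_mult_scalar[OF A y x] sym by simp

lemma conjugate_of_real_mat_mult_vec:
  fixes A :: "real mat"
  assumes A: "A \<in> carrier_mat n n" and z: "z \<in> carrier_vec n"
  shows "conjugate (map_mat complex_of_real A *\<^sub>v z) = map_mat complex_of_real A *\<^sub>v conjugate z"
proof (rule eq_vecI)
  fix i assume "i < dim_vec (map_mat complex_of_real A *\<^sub>v conjugate z)"
  hence i: "i < n" using A by simp
  have "conjugate (row (map_mat complex_of_real A) i) = row (map_mat complex_of_real A) i"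
    using A i by (intro eq_vecI) auto
  thus "conjugate (map_mat complex_of_real A *\<^sub>v z) $ i = (map_mat complex_of_real A *\<^sub>v conjugate z) $ i"
    using A i z conjugate_sprod_vec[of "row (map_mat complex_of_real A) i" n z] by simp
qed (use A in simp)

lemma symmetric_real_mat_complex_eigenvalue_real:
  fixes A :: "real mat"
  assumes A: "A \<in> carrier_mat n n" and sym: "transpose_mat A = A"
    and ev: "eigenvalue (map_mat complex_of_real A) a"
  shows "a = complex_of_real (Re a)"
proof -
  let ?Ac = "map_mat complex_of_real A"
  have Ac: "?Ac \<in> carrier_mat n n" and symAc: "transpose_mat ?Ac = ?Ac"
    using A sym by (auto simp: map_mat_transpose)
  obtain z where z: "z \<in> carrier_vec n" and z0: "z \<noteq> 0\<^sub>v n" and Az: "?Ac *\<^sub>v z = a \<cdot>\<^sub>v z"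
    using ev Ac unfolding eigenvalue_def eigenvector_def by auto
  have cz: "conjugate z \<in> carrier_vec n" using z by simp
  have "a * (z \<bullet>c z) = (?Ac *\<^sub>v z) \<bullet> conjugate z"
    unfolding Az using z cz by simp
  also have "\<dots> = z \<bullet> (?Ac *\<^sub>v conjugate z)"
    using symmetric_mat_scalar_prod[OF Ac symAc z cz] by simp
  also have "\<dots> = z \<bullet>c (?Ac *\<^sub>v z)"
    using conjugate_of_real_mat_mult_vec[OF A z] by simp
  also have "\<dots> = cnj a * (z \<bullet>c z)"
    unfolding Az conjugate_smult_vec using z cz by simp
  finally have "a = cnj a" using z z0 by simp
  thus ?thesis by (simp add: complex_eq_iff)
qed

lemma symmetric_real_mat_eigenvalue_exists:
  fixes A :: "real mat"
  assumes A: "A \<in> carrier_mat n n" and sym: "transpose_mat A = A" and n: "0 < n"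
  shows "\<exists>e. eigenvalue A e"
proof -
  let ?Ac = "map_mat complex_of_real A"
  have Ac: "?Ac \<in> carrier_mat n n" using A by auto
  obtain as where cp: "char_poly ?Ac = (\<Prod>a\<leftarrow>as. [:-a, 1:])" and len: "length as = n"
    using char_poly_factorized[OF Ac] by blast
  have "hd as \<in> set as" using len n by (cases as) auto
  hence "poly (char_poly ?Ac) (hd as) = 0" unfolding cp by (rule linear_poly_root)
  hence ev: "eigenvalue ?Ac (hd as)" using eigenvalue_root_char_poly[OF Ac] by simp
  define e where "e = Re (hd as)"
  have "complex_of_real (poly (char_poly A) e) = poly (char_poly ?Ac) (complex_of_real e)"
    by (simp add: of_real_hom.char_poly_hom[OF A] of_real_hom.poly_map_poly)
  also have "\<dots> = 0"
    using \<open>poly (char_poly ?Ac) (hd as) = 0\<close> symmetric_real_mat_complex_eigenvalue_real[OF A sym ev]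
    unfolding e_def by simp
  finally show ?thesis using eigenvalue_root_char_poly[OF A] by auto
qed

lemma corthogonal_normalize:
  fixes gs :: "real vec list"
  assumes gs: "set gs \<subseteq> carrier_vec n" and orth: "corthogonal gs"
    and i: "i < length gs" and j: "j < length gs"
  defines "ws \<equiv> map (\<lambda>w. (1 / sqrt (w \<bullet> w)) \<cdot>\<^sub>v w) gs"
  shows "ws ! i \<bullet> ws ! j = (if i = j then 1 else 0)"
proof -
  have gsi: "gs ! k \<in> carrier_vec n" if "k < length gs" for k using that gs by (auto simp: nth_mem subsetD)
  have "0 < gs ! i \<bullet> gs ! i"
    using corthogonalD[OF orth i i] scalar_prod_self_nonneg[of "gs ! i"] by force
  moreover have "ws ! i \<bullet> ws ! j
      = (1 / sqrt (gs ! i \<bullet> gs ! i)) * (1 / sqrt (gs ! j \<bullet> gs ! j)) * (gs ! i \<bullet> gs ! j)"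
    unfolding ws_def using i j gsi[OF i] gsi[OF j] by (simp add: scalar_prod_smult_distrib[of _ n])
  ultimately show ?thesis
    using corthogonalD[OF orth i j] by (cases "i = j") (auto simp: real_sqrt_mult[symmetric])
qed

lemma orthonormal_list_with_hd:
  fixes u :: "real vec"
  assumes u: "u \<in> carrier_vec n" and uu: "u \<bullet> u = 1"
  shows "\<exists>ws. length ws = n \<and> set ws \<subseteq> carrier_vec n \<and> ws ! 0 = u \<and>
    (\<forall>i<n. \<forall>j<n. ws ! i \<bullet> ws ! j = (if i = j then 1 else 0))"
proof -
  have u0: "u \<noteq> 0\<^sub>v n" using uu u by auto
  have n: "0 < n"
  proof (rule ccontr)
    assume "\<not> 0 < n"
    hence "u = 0\<^sub>v n" using u by (intro eq_vecI) auto
    thus False using u0 by simp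
  qed
  interpret cof_vec_space n "TYPE(real)" .
  define b where "b = basis_completion u"
  from basis_completion[OF u u0, folded b_def]
  have b: "set b \<subseteq> carrier_vec n" and dist_b: "distinct b" and indep: "\<not> lin_dep (set b)"
    and hdb: "hd b = u" and len_b: "length b = n" by auto
  from hdb len_b n obtain vs where bv: "b = u # vs" by (cases b) auto
  define gs where "gs = gram_schmidt n b"
  from gram_schmidt_result[OF b dist_b indep refl, folded gs_def]
  have gs: "set gs \<subseteq> carrier_vec n" and orth: "corthogonal gs" and len: "length gs = n"
    by (auto simp: len_b)
  have "hd gs = u" using gram_schmidt_hd[OF u, of vs] unfolding gs_def bv .
  hence "gs ! 0 = u" using len n by (cases gs) auto
  define ws where "ws = map (\<lambda>w. (1 / sqrt (w \<bullet> w)) \<cdot>\<^sub>v w) gs"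
  have "ws ! 0 = u" unfolding ws_def using len n \<open>gs ! 0 = u\<close> uu by (cases gs) auto
  moreover have "length ws = n" "set ws \<subseteq> carrier_vec n" using len gs unfolding ws_def by auto
  moreover have "\<forall>i<n. \<forall>j<n. ws ! i \<bullet> ws ! j = (if i = j then 1 else 0)"
    using corthogonal_normalize[OF gs orth] len unfolding ws_def by simp
  ultimately show ?thesis by blast
qed

lemma orthonormal_cols_orthogonal_mat:
  fixes ws :: "real vec list"
  assumes len: "length ws = n" and ws: "set ws \<subseteq> carrier_vec n"
    and orth: "\<And>i j. i < n \<Longrightarrow> j < n \<Longrightarrow> ws ! i \<bullet> ws ! j = (if i = j then 1 else 0)"
  defines "W \<equiv> mat_of_cols n ws"
  shows "W \<in> carrier_mat n n" "transpose_mat W * W = 1\<^sub>m n" "W * transpose_mat W = 1\<^sub>m n"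
    "\<And>i. i < n \<Longrightarrow> col W i = ws ! i"
proof -
  show W: "W \<in> carrier_mat n n" unfolding W_def using mat_of_cols_carrier(1)[of n ws] len by simp
  show col: "col W i = ws ! i" if "i < n" for i
    unfolding W_def using that len ws by (simp add: col_mat_of_cols nth_mem subsetD)
  show WtW: "transpose_mat W * W = 1\<^sub>m n"
    by (rule eq_matI) (use W in \<open>auto simp: row_transpose col orth\<close>)
  show "W * transpose_mat W = 1\<^sub>m n"
    using mat_mult_left_right_inverse[OF _ W WtW] W by auto
qed

lemma orthogonal_conj_first_col_eigenvector:
  fixes A :: "real mat"
  assumes A: "A \<in> carrier_mat n n" and W: "W \<in> carrier_mat n n"
    and WtW: "transpose_mat W * W = 1\<^sub>m n" and n: "0 < n"
    and eig: "A *\<^sub>v col W 0 = e \<cdot>\<^sub>v col W 0" and i: "i < n"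
  shows "(transpose_mat W * A * W) $$ (i, 0) = (if i = 0 then e else 0)"
proof -
  have "(transpose_mat W * A * W) $$ (i, 0) = col W i \<bullet> (A *\<^sub>v col W 0)"
    using i A W n by (simp add: assoc_mult_mat[of _ n n _ n _ n] row_transpose mult_mat_vec_def)
  also have "\<dots> = e * (col W i \<bullet> col W 0)" unfolding eig using W i n by simp
  also have "col W i \<bullet> col W 0 = (transpose_mat W * W) $$ (i, 0)" using W i n by (simp add: row_transpose)
  finally show ?thesis using WtW i n by simp
qed

lemma symmetric_mat_first_col_block:
  fixes M :: "real mat"
  assumes M: "M \<in> carrier_mat (Suc m) (Suc m)" and sym: "transpose_mat M = M"
    and col0: "\<And>i. i < Suc m \<Longrightarrow> M $$ (i, 0) = (if i = 0 then e else 0)"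
  defines "M' \<equiv> mat m m (\<lambda>(i, j). M $$ (Suc i, Suc j))"
  shows "M = four_block_mat (mat 1 1 (\<lambda>_. e)) (0\<^sub>m 1 m) (0\<^sub>m m 1) M'" "transpose_mat M' = M'"
proof -
  have Msym: "M $$ (j, i) = M $$ (i, j)" if "i < Suc m" "j < Suc m" for i j
    using arg_cong[OF sym, of "\<lambda>X. X $$ (i, j)"] that M by simp
  show "M = four_block_mat (mat 1 1 (\<lambda>_. e)) (0\<^sub>m 1 m) (0\<^sub>m m 1) M'"
  proof (rule eq_matI)
    fix i j assume "i < dim_row (four_block_mat (mat 1 1 (\<lambda>_. e)) (0\<^sub>m 1 m) (0\<^sub>m m 1) M')"
      "j < dim_col (four_block_mat (mat 1 1 (\<lambda>_. e)) (0\<^sub>m 1 m) (0\<^sub>m m 1) M')"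
    hence i: "i < Suc m" and j: "j < Suc m" unfolding M'_def by auto
    show "M $$ (i, j) = four_block_mat (mat 1 1 (\<lambda>_. e)) (0\<^sub>m 1 m) (0\<^sub>m m 1) M' $$ (i, j)"
      using i j col0 Msym[OF i j] col0[OF j] unfolding M'_def by (cases i; cases j) auto
  qed (use M in \<open>auto simp: M'_def\<close>)
  show "transpose_mat M' = M'"
    by (rule eq_matI) (auto simp: M'_def Msym)
qed

lemma four_block_orthogonally_diagonalizable:
  fixes M' :: "real mat"
  assumes M': "M' \<in> carrier_mat m m"
    and sim: "similar_mat_wit M' D' P' (transpose_mat P')" and diag: "diagonal_mat D'"
  shows "\<exists>P D. similar_mat_wit (four_block_mat (mat 1 1 (\<lambda>_. e)) (0\<^sub>m 1 m) (0\<^sub>m m 1) M') D P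
      (transpose_mat P) \<and> diagonal_mat D"
proof -
  let ?E = "mat 1 1 (\<lambda>_. e) :: real mat"
  from similar_mat_witD2[OF M' sim] have D': "D' \<in> carrier_mat m m" and P': "P' \<in> carrier_mat m m"
    by auto
  define P where "P = four_block_mat (1\<^sub>m 1) (0\<^sub>m 1 m) (0\<^sub>m m 1) P'"
  define D where "D = four_block_mat ?E (0\<^sub>m 1 m) (0\<^sub>m m 1) D'"
  have "transpose_mat P = four_block_mat (1\<^sub>m 1) (0\<^sub>m 1 m) (0\<^sub>m m 1) (transpose_mat P')"
    unfolding P_def using P' by (subst transpose_four_block_mat[of _ 1 1 _ m _ m]) auto
  moreover have "similar_mat_wit (four_block_mat ?E (0\<^sub>m 1 m) (0\<^sub>m m 1) M') D P
      (four_block_mat (1\<^sub>m 1) (0\<^sub>m 1 m) (0\<^sub>m m 1) (transpose_mat P'))"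
    unfolding D_def P_def
    by (rule similar_mat_wit_four_block[OF similar_mat_wit_refl sim]) (use M' P' in auto)
  moreover have "diagonal_mat D" using diag D' unfolding diagonal_mat_def D_def by auto
  ultimately show ?thesis by metis
qed

lemma symmetric_real_mat_unit_eigenvector:
  fixes A :: "real mat"
  assumes A: "A \<in> carrier_mat n n" and sym: "transpose_mat A = A" and n: "0 < n"
  obtains e u where "u \<in> carrier_vec n" "u \<bullet> u = 1" "A *\<^sub>v u = e \<cdot>\<^sub>v u"
proof -
  obtain e where "eigenvalue A e" using symmetric_real_mat_eigenvalue_exists[OF A sym n] by auto
  then obtain v where v: "v \<in> carrier_vec n" and v0: "v \<noteq> 0\<^sub>v n" and Av: "A *\<^sub>v v = e \<cdot>\<^sub>v v"
    unfolding eigenvalue_def eigenvector_def using A by auto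
  have vv: "0 < v \<bullet> v"
    using scalar_prod_self_nonneg[of v] scalar_prod_self_eq_0_iff[OF v] v0 by linarith
  define u where "u = (1 / sqrt (v \<bullet> v)) \<cdot>\<^sub>v v"
  have "u \<in> carrier_vec n" "u \<bullet> u = 1" "A *\<^sub>v u = e \<cdot>\<^sub>v u"
    unfolding u_def using v vv A Av
    by (auto simp: scalar_prod_smult_distrib[of _ n] mult_mat_vec smult_smult_assoc mult.commute)
  thus ?thesis by (rule that)
qed

text \<open>Conjugating by an orthogonal matrix whose first column is a unit eigenvector splits off
  the eigenvalue as a 1 x 1 block.\<close>
lemma symmetric_mat_deflation:
  fixes A :: "real mat"
  assumes A: "A \<in> carrier_mat (Suc m) (Suc m)" and sym: "transpose_mat A = A"
  obtains e W M' where "similar_mat_wit A (four_block_mat (mat 1 1 (\<lambda>_. e)) (0\<^sub>m 1 m) (0\<^sub>m m 1) M') W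
      (transpose_mat W)" and "M' \<in> carrier_mat m m" and "transpose_mat M' = M'"
proof -
  obtain e u where u: "u \<in> carrier_vec (Suc m)" and uu: "u \<bullet> u = 1" and Au: "A *\<^sub>v u = e \<cdot>\<^sub>v u"
    using symmetric_real_mat_unit_eigenvector[OF A sym zero_less_Suc] by blast
  obtain ws where len: "length ws = Suc m" and ws: "set ws \<subseteq> carrier_vec (Suc m)" and ws0: "ws ! 0 = u"
    and orth: "\<And>i j. i < Suc m \<Longrightarrow> j < Suc m \<Longrightarrow> ws ! i \<bullet> ws ! j = (if i = j then 1 else 0)"
    using orthonormal_list_with_hd[OF u uu] by blast
  define W where "W = mat_of_cols (Suc m) ws"
  note W = orthonormal_cols_orthogonal_mat[OF len ws orth, folded W_def]
  define M where "M = transpose_mat W * A * W"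
  have M: "M \<in> carrier_mat (Suc m) (Suc m)" unfolding M_def using A W by auto
  have symM: "transpose_mat M = M" unfolding M_def using A W sym
    by (simp add: transpose_mult[of _ "Suc m" "Suc m" _ "Suc m"] assoc_mult_mat[of _ "Suc m" "Suc m" _ "Suc m" _ "Suc m"])
  have col0: "\<And>i. i < Suc m \<Longrightarrow> M $$ (i, 0) = (if i = 0 then e else 0)"
    unfolding M_def using orthogonal_conj_first_col_eigenvector[OF A W(1,2)] Au W(4) ws0 by simp
  have simM: "similar_mat_wit A M W (transpose_mat W)"
  proof (rule similar_mat_witI[OF W(3,2) _ A M W(1)])
    have "W * M * transpose_mat W = (W * transpose_mat W) * A * (W * transpose_mat W)"
      unfolding M_def using A W(1) by (simp add: assoc_mult_mat[of _ "Suc m" "Suc m" _ "Suc m" _ "Suc m"])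
    thus "A = W * M * transpose_mat W" using A W(3) by simp
  qed (use W(1) in auto)
  define M' where "M' = mat m m (\<lambda>(i, j). M $$ (Suc i, Suc j))"
  note block = symmetric_mat_first_col_block[OF M symM col0, folded M'_def]
  have "similar_mat_wit A (four_block_mat (mat 1 1 (\<lambda>_. e)) (0\<^sub>m 1 m) (0\<^sub>m m 1) M') W (transpose_mat W)"
    using simM block(1) by simp
  thus ?thesis by (rule that) (use block(2) in \<open>simp_all add: M'_def\<close>)
qed

lemma symmetric_mat_orthogonally_diagonalizable:
  fixes A :: "real mat"
  assumes "A \<in> carrier_mat n n" and "transpose_mat A = A"
  shows "\<exists>P D. similar_mat_wit A D P (transpose_mat P) \<and> diagonal_mat D"
  using assms
proof (induction n arbitrary: A)
  case 0
  hence "similar_mat_wit A A (1\<^sub>m 0) (transpose_mat (1\<^sub>m 0))" "diagonal_mat A"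
    using similar_mat_wit_refl[of A 0] by (auto simp: diagonal_mat_def)
  thus ?case by blast
next
  case (Suc m A)
  then obtain e W M' where simA: "similar_mat_wit A (four_block_mat (mat 1 1 (\<lambda>_. e)) (0\<^sub>m 1 m) (0\<^sub>m m 1) M')
      W (transpose_mat W)" and M': "M' \<in> carrier_mat m m" "transpose_mat M' = M'"
    using symmetric_mat_deflation by metis
  obtain P' D' where "similar_mat_wit M' D' P' (transpose_mat P')" and "diagonal_mat D'"
    using Suc.IH[OF M'] by auto
  from four_block_orthogonally_diagonalizable[OF M'(1) this, where e = e]
  obtain P D where simM: "similar_mat_wit (four_block_mat (mat 1 1 (\<lambda>_. e)) (0\<^sub>m 1 m) (0\<^sub>m m 1) M') D P
      (transpose_mat P)" and diag: "diagonal_mat D"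
    by auto
  note cA = similar_mat_witD2[OF Suc.prems(1) simA]
  have W: "W \<in> carrier_mat (Suc m) (Suc m)" and P: "P \<in> carrier_mat (Suc m) (Suc m)"
    using cA(6) similar_mat_witD2(6)[OF cA(5) simM] .
  from similar_mat_wit_trans[OF simA simM] have "similar_mat_wit A D (W * P) (transpose_mat (W * P))"
    using transpose_mult[OF W P] by simp
  thus ?case using diag by blast
qed

section \<open>Quadratic forms and eigenvalues\<close>

lemma diagonal_mat_mult_vec:
  fixes D :: "'a :: comm_semiring_0 mat"
  assumes D: "D \<in> carrier_mat n n" and diag: "diagonal_mat D" and y: "y \<in> carrier_vec n"
  shows "D *\<^sub>v y = vec n (\<lambda>i. D $$ (i, i) * y $ i)"
proof (rule eq_vecI)
  fix i assume "i < dim_vec (vec n (\<lambda>i. D $$ (i, i) * y $ i))"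
  hence i: "i < n" by simp
  have "(D *\<^sub>v y) $ i = (\<Sum>j\<in>{0..<n}. D $$ (i, j) * y $ j)"
    using i D y by (simp add: scalar_prod_def row_def)
  also have "\<dots> = (\<Sum>j\<in>{0..<n}. if j = i then D $$ (i, i) * y $ i else 0)"
    by (rule sum.cong) (use diag D i in \<open>auto simp: diagonal_mat_def\<close>)
  finally show "(D *\<^sub>v y) $ i = vec n (\<lambda>i. D $$ (i, i) * y $ i) $ i" using i by simp
qed (use D in simp)

context
  fixes A D P :: "real mat" and n :: nat
  assumes A: "A \<in> carrier_mat n n"
    and sim: "similar_mat_wit A D P (transpose_mat P)" and diag: "diagonal_mat D"
begin

lemma orthogonal_diagonalization_carrier: "D \<in> carrier_mat n n" "P \<in> carrier_mat n n"
  using similar_mat_witD2[OF A sim] by auto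

lemma orthogonal_diagonalization_mult_vec:
  assumes x: "x \<in> carrier_vec n"
  shows "transpose_mat P *\<^sub>v (A *\<^sub>v x) = D *\<^sub>v (transpose_mat P *\<^sub>v x)"
proof -
  note s = similar_mat_witD2[OF A sim] and c = orthogonal_diagonalization_carrier
  have "transpose_mat P *\<^sub>v (A *\<^sub>v x) = (transpose_mat P * P) *\<^sub>v (D *\<^sub>v (transpose_mat P *\<^sub>v x))"
    using s(3) c x by (simp add: assoc_mult_mat_vec[of _ n n _ n])
  thus ?thesis using s(2) c x by simp
qed

lemma orthogonal_diagonalization_scalar_prod:
  assumes x: "x \<in> carrier_vec n" and y: "y \<in> carrier_vec n"
  shows "(transpose_mat P *\<^sub>v x) \<bullet> (transpose_mat P *\<^sub>v y) = x \<bullet> y"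
proof -
  note s = similar_mat_witD2[OF A sim] and c = orthogonal_diagonalization_carrier
  have "(transpose_mat P *\<^sub>v x) \<bullet> (transpose_mat P *\<^sub>v y) = x \<bullet> (P *\<^sub>v (transpose_mat P *\<^sub>v y))"
    using transpose_vec_mult_scalar[OF c(2) _ x, of "transpose_mat P *\<^sub>v y"] c y by simp
  also have "P *\<^sub>v (transpose_mat P *\<^sub>v y) = y"
    using s(1) c y by (simp add: assoc_mult_mat_vec[symmetric, of _ n n _ n])
  finally show ?thesis .
qed

lemma orthogonal_diagonalization_quadratic_form:
  assumes x: "x \<in> carrier_vec n"
  shows "x \<bullet> (A *\<^sub>v x) = (\<Sum>i<n. D $$ (i, i) * ((transpose_mat P *\<^sub>v x) $ i)\<^sup>2)"
    and "x \<bullet> x = (\<Sum>i<n. ((transpose_mat P *\<^sub>v x) $ i)\<^sup>2)"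
proof -
  note c = orthogonal_diagonalization_carrier
  define y where "y = transpose_mat P *\<^sub>v x"
  have y: "y \<in> carrier_vec n" unfolding y_def using c x by simp
  have "x \<bullet> (A *\<^sub>v x) = y \<bullet> (D *\<^sub>v y)"
    using orthogonal_diagonalization_scalar_prod[OF x mult_mat_vec_carrier[OF A x]]
      orthogonal_diagonalization_mult_vec[OF x] unfolding y_def by simp
  also have "\<dots> = (\<Sum>i<n. D $$ (i, i) * (y $ i)\<^sup>2)"
    unfolding diagonal_mat_mult_vec[OF c(1) diag y] using y
    by (simp add: scalar_prod_def lessThan_atLeast0 power2_eq_square algebra_simps)
  finally show "x \<bullet> (A *\<^sub>v x) = (\<Sum>i<n. D $$ (i, i) * ((transpose_mat P *\<^sub>v x) $ i)\<^sup>2)"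
    unfolding y_def .
  have "x \<bullet> x = y \<bullet> y" unfolding y_def using orthogonal_diagonalization_scalar_prod[OF x x] by simp
  also have "\<dots> = (\<Sum>i<n. (y $ i)\<^sup>2)" using y
    by (simp add: scalar_prod_def lessThan_atLeast0 power2_eq_square)
  finally show "x \<bullet> x = (\<Sum>i<n. ((transpose_mat P *\<^sub>v x) $ i)\<^sup>2)" unfolding y_def .
qed

lemma orthogonal_diagonalization_eigenvalue:
  assumes i: "i < n"
  shows "eigenvalue A (D $$ (i, i))"
proof -
  note s = similar_mat_witD2[OF A sim] and c = orthogonal_diagonalization_carrier
  define u where "u = P *\<^sub>v unit_vec n i"
  have u: "u \<in> carrier_vec n" unfolding u_def using c by simp
  have Ptu: "transpose_mat P *\<^sub>v u = unit_vec n i"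
    unfolding u_def using s(2) c by (simp add: assoc_mult_mat_vec[symmetric, of _ n n _ n])
  have "u \<noteq> 0\<^sub>v n"
  proof
    assume "u = 0\<^sub>v n"
    hence "transpose_mat P *\<^sub>v u = 0\<^sub>v n" using c by (intro eq_vecI) (auto simp: scalar_prod_def)
    thus False using Ptu i by (metis index_unit_vec(1) index_zero_vec(1) zero_neq_one)
  qed
  moreover have "A *\<^sub>v u = D $$ (i, i) \<cdot>\<^sub>v u"
  proof -
    have "A *\<^sub>v u = P *\<^sub>v (D *\<^sub>v (transpose_mat P *\<^sub>v u))"
      using s(3) c u by (simp add: assoc_mult_mat_vec[of _ n n _ n])
    also have "D *\<^sub>v (transpose_mat P *\<^sub>v u) = D $$ (i, i) \<cdot>\<^sub>v unit_vec n i"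
      unfolding Ptu diagonal_mat_mult_vec[OF c(1) diag unit_vec_carrier]
      by (rule eq_vecI) (auto simp: unit_vec_def)
    finally show ?thesis unfolding u_def using c by (simp add: mult_mat_vec)
  qed
  ultimately show ?thesis unfolding eigenvalue_def eigenvector_def using u A by auto
qed

end

lemma symmetric_mat_quadratic_form_bounds:
  fixes A :: "real mat"
  assumes A: "A \<in> carrier_mat n n" and sym: "transpose_mat A = A"
    and ev: "\<And>e. eigenvalue A e \<Longrightarrow> lo \<le> e \<and> e \<le> hi"
    and x: "x \<in> carrier_vec n"
  shows "lo * (x \<bullet> x) \<le> x \<bullet> (A *\<^sub>v x)" and "x \<bullet> (A *\<^sub>v x) \<le> hi * (x \<bullet> x)"
proof -
  obtain P D where sim: "similar_mat_wit A D P (transpose_mat P)" and diag: "diagonal_mat D"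
    using symmetric_mat_orthogonally_diagonalizable[OF A sym] by blast
  define y where "y = transpose_mat P *\<^sub>v x"
  note q = orthogonal_diagonalization_quadratic_form[OF A sim diag x, folded y_def]
  have b: "lo \<le> D $$ (i, i) \<and> D $$ (i, i) \<le> hi" if "i < n" for i
    using ev[OF orthogonal_diagonalization_eigenvalue[OF A sim diag that]] .
  have "(\<Sum>i<n. lo * (y $ i)\<^sup>2) \<le> (\<Sum>i<n. D $$ (i, i) * (y $ i)\<^sup>2)"
    by (intro sum_mono mult_right_mono) (use b in auto)
  thus "lo * (x \<bullet> x) \<le> x \<bullet> (A *\<^sub>v x)" unfolding q by (simp add: sum_distrib_left)
  have "(\<Sum>i<n. D $$ (i, i) * (y $ i)\<^sup>2) \<le> (\<Sum>i<n. hi * (y $ i)\<^sup>2)"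
    by (intro sum_mono mult_right_mono) (use b in auto)
  thus "x \<bullet> (A *\<^sub>v x) \<le> hi * (x \<bullet> x)" unfolding q by (simp add: sum_distrib_left)
qed

section \<open>The second smallest eigenvalue\<close>

lemma card_less_second_smallest:
  fixes l :: "'a :: linorder list"
  shows "card {i. i < length l \<and> l ! i < sort l ! 1} \<le> 1"
proof (cases "length l < 2")
  case True
  have "card {i. i < length l \<and> l ! i < sort l ! 1} \<le> card {..<length l}"
    by (rule card_mono) auto
  thus ?thesis using True by simp
next
  case False
  hence "2 \<le> length (sort l)" by simp
  then obtain a b r where s: "sort l = a # b # r"
    by (cases "sort l"; cases "tl (sort l)") auto
  have "sorted (a # b # r)" using sorted_sort[of l] unfolding s .
  hence "filter (\<lambda>x. x < b) (b # r) = []" by (auto simp: filter_empty_conv)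
  hence "length (filter (\<lambda>x. x < sort l ! 1) (sort l)) \<le> 1" unfolding s by simp
  moreover have "card {i. i < length l \<and> l ! i < sort l ! 1} = length (filter (\<lambda>x. x < sort l ! 1) l)"
    by (simp add: length_filter_conv_card)
  moreover have "length (filter (\<lambda>x. x < sort l ! 1) l) = length (filter (\<lambda>x. x < sort l ! 1) (sort l))"
    by (metis mset_filter mset_sort size_mset)
  ultimately show ?thesis by simp
qed

lemma proots_prod_linear_factors: "proots (\<Prod>a\<leftarrow>l. [:- a, 1:]) = mset (l :: 'a :: idom list)"
proof (induction l)
  case (Cons a l)
  have "proots (\<Prod>a\<leftarrow>a # l. [:- a, 1:]) = proots ([:- a, 1:] * (\<Prod>a\<leftarrow>l. [:- a, 1:]))"
    by simp
  also have "\<dots> = proots [:- a, 1:] + proots (\<Prod>a\<leftarrow>l. [:- a, 1:])"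
    by (rule proots_mult) (auto simp: prod_list_zero_iff)
  finally show ?case using Cons by simp
qed simp

lemma sorted_eigenvalues_diagonalization:
  assumes A: "A \<in> carrier_mat n n" and sim: "similar_mat_wit A D P Q" and diag: "diagonal_mat D"
  shows "sorted_eigenvalues A = sort (diag_mat D)"
proof -
  have D: "D \<in> carrier_mat n n" using similar_mat_witD2[OF A sim] by auto
  have "char_poly A = char_poly D" using sim by (intro char_poly_similar) (auto simp: similar_mat_def)
  also have "\<dots> = (\<Prod>a\<leftarrow>diag_mat D. [:- a, 1:])"
    using D diag by (intro char_poly_upper_triangular) (auto simp: diagonal_mat_def upper_triangular_def)
  finally show ?thesis
    unfolding sorted_eigenvalues_def by (simp add: proots_prod_linear_factors sorted_list_of_multiset_mset)
qed

lemma scalar_prod_single_support: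
  assumes z: "z \<in> carrier_vec n" and i: "i < n" and supp: "\<And>j. j < n \<Longrightarrow> j \<noteq> i \<Longrightarrow> z $ j = 0"
  shows "y \<bullet> z = y $ i * z $ i"
proof -
  have "y \<bullet> z = (\<Sum>j\<in>{0..<n}. y $ j * z $ j)" using z by (simp add: scalar_prod_def)
  also have "\<dots> = y $ i * z $ i"
    by (subst sum.remove[of _ i]) (use i supp in \<open>auto intro!: sum.neutral\<close>)
  finally show ?thesis .
qed

text \<open>P^T u is a nonzero null vector of D; as all other diagonal entries are at least \<rho> > 0,
  it is supported on the single index i.\<close>
lemma orthogonal_diagonalization_kernel_coordinate:
  fixes A :: "real mat"
  assumes A: "A \<in> carrier_mat n n"
    and sim: "similar_mat_wit A D P (transpose_mat P)" and diag: "diagonal_mat D"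
    and u: "u \<in> carrier_vec n" "u \<noteq> 0\<^sub>v n" "A *\<^sub>v u = 0\<^sub>v n"
    and card: "card {i. i < n \<and> D $$ (i, i) < \<rho>} \<le> 1" and \<rho>: "0 < \<rho>"
    and i: "i < n" and small: "D $$ (i, i) < \<rho>"
  shows "D $$ (i, i) = 0" and "\<And>x. x \<in> carrier_vec n \<Longrightarrow> x \<bullet> u = 0 \<Longrightarrow> (transpose_mat P *\<^sub>v x) $ i = 0"
proof -
  note c = orthogonal_diagonalization_carrier[OF A sim diag]
  define z where "z = transpose_mat P *\<^sub>v u"
  have z: "z \<in> carrier_vec n" unfolding z_def using c u by simp
  have "D *\<^sub>v z = transpose_mat P *\<^sub>v (A *\<^sub>v u)"
    unfolding z_def orthogonal_diagonalization_mult_vec[OF A sim diag u(1)] ..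
  also have "\<dots> = 0\<^sub>v n" unfolding u(3) using c by (intro eq_vecI) (auto simp: scalar_prod_def)
  finally have Dz0: "D *\<^sub>v z = 0\<^sub>v n" .
  have Dz: "D $$ (j, j) * z $ j = 0" if "j < n" for j
    using arg_cong[OF Dz0, of "\<lambda>v. v $ j"] that unfolding diagonal_mat_mult_vec[OF c(1) diag z] by simp
  have others: "\<rho> \<le> D $$ (j, j)" if j: "j < n" "j \<noteq> i" for j
  proof (rule ccontr)
    assume "\<not> \<rho> \<le> D $$ (j, j)"
    hence "{i, j} \<subseteq> {i. i < n \<and> D $$ (i, i) < \<rho>}" using small i j by auto
    from card_mono[OF _ this] card j show False by auto
  qed
  have z_others: "z $ j = 0" if "j < n" "j \<noteq> i" for j using Dz[of j] others[OF that] \<rho> that by auto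
  note single = scalar_prod_single_support[OF z i z_others]
  have "z $ i * z $ i = u \<bullet> u"
    using single[of z] orthogonal_diagonalization_scalar_prod[OF A sim diag u(1) u(1)] unfolding z_def by simp
  hence zi: "z $ i \<noteq> 0" using u(1,2) scalar_prod_self_eq_0_iff[OF u(1)] by auto
  show "D $$ (i, i) = 0" using Dz[OF i] zi by simp
  fix x assume x: "x \<in> carrier_vec n" and xu: "x \<bullet> u = 0"
  define y where "y = transpose_mat P *\<^sub>v x"
  have "y \<bullet> z = 0" unfolding y_def z_def using orthogonal_diagonalization_scalar_prod[OF A sim diag x u(1)] xu by simp
  moreover have "y \<bullet> z = y $ i * z $ i" by (rule single)
  ultimately show "(transpose_mat P *\<^sub>v x) $ i = 0" using zi unfolding y_def by simp
qed

lemma symmetric_mat_second_eigenvalue_bounds: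
  fixes A :: "real mat"
  assumes A: "A \<in> carrier_mat n n" and sym: "transpose_mat A = A"
    and u: "u \<in> carrier_vec n" "u \<noteq> 0\<^sub>v n" "A *\<^sub>v u = 0\<^sub>v n"
    and \<rho>: "\<rho> = sorted_eigenvalues A ! 1" "0 < \<rho>"
    and x: "x \<in> carrier_vec n"
  shows "0 \<le> x \<bullet> (A *\<^sub>v x)" and "x \<bullet> u = 0 \<Longrightarrow> \<rho> * (x \<bullet> x) \<le> x \<bullet> (A *\<^sub>v x)"
proof -
  obtain P D where sim: "similar_mat_wit A D P (transpose_mat P)" and diag: "diagonal_mat D"
    using symmetric_mat_orthogonally_diagonalizable[OF A sym] by blast
  note c = orthogonal_diagonalization_carrier[OF A sim diag]
  have diag_nth: "diag_mat D ! i = D $$ (i, i)" if "i < n" for i using c that by (simp add: diag_mat_def)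
  have "{i. i < n \<and> D $$ (i, i) < \<rho>} = {i. i < length (diag_mat D) \<and> diag_mat D ! i < sort (diag_mat D) ! 1}"
    using c diag_nth \<rho>(1) sorted_eigenvalues_diagonalization[OF A sim diag] by (auto simp: diag_mat_def)
  hence card: "card {i. i < n \<and> D $$ (i, i) < \<rho>} \<le> 1" using card_less_second_smallest[of "diag_mat D"] by simp
  note kernel = orthogonal_diagonalization_kernel_coordinate[OF A sim diag u card \<rho>(2)]
  define y where "y = transpose_mat P *\<^sub>v x"
  note q = orthogonal_diagonalization_quadratic_form[OF A sim diag x, folded y_def]
  have "0 \<le> D $$ (i, i)" if "i < n" for i
    using kernel(1)[OF that] \<rho>(2) by (cases "\<rho> \<le> D $$ (i, i)") auto
  thus "0 \<le> x \<bullet> (A *\<^sub>v x)" unfolding q by (intro sum_nonneg) auto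
  assume xu: "x \<bullet> u = 0"
  have "\<rho> * (y $ i)\<^sup>2 \<le> D $$ (i, i) * (y $ i)\<^sup>2" if i: "i < n" for i
    using kernel[OF i] x xu unfolding y_def by (cases "\<rho> \<le> D $$ (i, i)") (auto intro: mult_right_mono)
  hence "(\<Sum>i<n. \<rho> * (y $ i)\<^sup>2) \<le> (\<Sum>i<n. D $$ (i, i) * (y $ i)\<^sup>2)" by (intro sum_mono) auto
  thus "\<rho> * (x \<bullet> x) \<le> x \<bullet> (A *\<^sub>v x)" unfolding q by (simp add: sum_distrib_left)
qed

section \<open>Kronecker product with the identity\<close>

lemma sum_lessThan_mult_split:
  fixes N d :: nat
  shows "(\<Sum>k<N * d. f k) = (\<Sum>i<N. \<Sum>a<d. f (i * d + a))"
proof (induction N)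
  case (Suc N)
  have "(\<Sum>k<Suc N * d. f k) = (\<Sum>k<N * d. f k) + (\<Sum>k = N * d..<N * d + d. f k)"
    unfolding lessThan_atLeast0 by (subst sum.atLeastLessThan_concat[symmetric]) (auto simp: add.commute)
  also have "(\<Sum>k = N * d..<N * d + d. f k) = (\<Sum>a<d. f (N * d + a))"
    by (simp add: sum.atLeastLessThan_shift_0[of f] lessThan_atLeast0)
  finally show ?case using Suc by simp
qed simp

lemma index_mult_add_less:
  fixes i N a d :: nat
  assumes "i < N" "a < d"
  shows "i * d + a < N * d"
proof -
  have "i * d + a < Suc i * d" using assms by simp
  also have "\<dots> \<le> N * d" using assms by (intro mult_right_mono) auto
  finally show ?thesis .
qed

definition coord_slice :: "nat \<Rightarrow> nat \<Rightarrow> 'a vec \<Rightarrow> nat \<Rightarrow> 'a vec" where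
  "coord_slice N d x a = vec N (\<lambda>i. x $ (i * d + a))"

lemma coord_slice_carrier[simp]: "coord_slice N d x a \<in> carrier_vec N"
  unfolding coord_slice_def by simp

lemma scalar_prod_coord_slices:
  fixes x y :: "'a :: comm_semiring_0 vec"
  assumes y: "y \<in> carrier_vec (N * d)"
  shows "x \<bullet> y = (\<Sum>a<d. coord_slice N d x a \<bullet> coord_slice N d y a)"
proof -
  have "x \<bullet> y = (\<Sum>i<N. \<Sum>a<d. x $ (i * d + a) * y $ (i * d + a))"
    using y by (simp add: scalar_prod_def atLeast0LessThan sum_lessThan_mult_split)
  also have "\<dots> = (\<Sum>a<d. \<Sum>i<N. x $ (i * d + a) * y $ (i * d + a))" by (rule sum.swap)
  finally show ?thesis by (simp add: coord_slice_def scalar_prod_def lessThan_atLeast0)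
qed

lemma kron_id_carrier: "M \<in> carrier_mat N N \<Longrightarrow> kron_id M d \<in> carrier_mat (N * d) (N * d)"
  unfolding kron_id_def by auto

lemma transpose_kron_id:
  assumes M: "M \<in> carrier_mat N N" and sym: "transpose_mat M = M"
  shows "transpose_mat (kron_id M d) = kron_id M d"
proof (rule eq_matI)
  fix i j assume ij: "i < dim_row (kron_id M d)" "j < dim_col (kron_id M d)"
  hence "i div d < N" "j div d < N" using M by (auto simp: kron_id_def less_mult_imp_div_less)
  hence "M $$ (j div d, i div d) = M $$ (i div d, j div d)"
    using M arg_cong[OF sym, of "\<lambda>X. X $$ (i div d, j div d)"] by simp
  thus "transpose_mat (kron_id M d) $$ (i, j) = kron_id M d $$ (i, j)"
    using ij M by (auto simp: kron_id_def)
qed (use M in \<open>auto simp: kron_id_def\<close>)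

lemma coord_slice_kron_id_mult_vec:
  assumes M: "M \<in> carrier_mat N N" and y: "y \<in> carrier_vec (N * d)" and a: "a < d"
  shows "coord_slice N d (kron_id M d *\<^sub>v y) a = M *\<^sub>v coord_slice N d y a"
proof (rule eq_vecI)
  fix i assume "i < dim_vec (M *\<^sub>v coord_slice N d y a)"
  hence i: "i < N" using M by simp
  have "(kron_id M d *\<^sub>v y) $ (i * d + a)
      = (\<Sum>j<N. \<Sum>b<d. kron_id M d $$ (i * d + a, j * d + b) * y $ (j * d + b))"
    using kron_id_carrier[OF M, of d] y index_mult_add_less[OF i a]
    by (simp add: scalar_prod_def atLeast0LessThan row_def sum_lessThan_mult_split)
  also have "\<dots> = (\<Sum>j<N. \<Sum>b<d. if b = a then M $$ (i, j) * y $ (j * d + a) else 0)"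
    by (intro sum.cong refl) (use M i a in \<open>auto simp: kron_id_def index_mult_add_less\<close>)
  also have "\<dots> = (M *\<^sub>v coord_slice N d y a) $ i"
    using M i a by (simp add: scalar_prod_def lessThan_atLeast0 row_def coord_slice_def)
  finally show "coord_slice N d (kron_id M d *\<^sub>v y) a $ i = (M *\<^sub>v coord_slice N d y a) $ i"
    using i by (simp add: coord_slice_def)
qed (use M in simp)

lemma scalar_prod_kron_id_mult_vec:
  assumes M: "M \<in> carrier_mat N N" and y: "y \<in> carrier_vec (N * d)"
  shows "x \<bullet> (kron_id M d *\<^sub>v y) = (\<Sum>a<d. coord_slice N d x a \<bullet> (M *\<^sub>v coord_slice N d y a))"
  unfolding scalar_prod_coord_slices[OF mult_mat_vec_carrier[OF kron_id_carrier[OF M] y]]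
  using coord_slice_kron_id_mult_vec[OF M y] by simp

lemma transpose_ones_kron_id_mult_vec:
  assumes v: "v \<in> carrier_vec (N * d)" and a: "a < d"
  shows "(transpose_mat (ones_kron_id N d) *\<^sub>v v) $ a = coord_slice N d v a \<bullet> vec N (\<lambda>_. 1)"
proof -
  have "(transpose_mat (ones_kron_id N d) *\<^sub>v v) $ a
      = (\<Sum>i<N. \<Sum>b<d. (if b = a then 1 else 0) * v $ (i * d + b))"
    using v a by (simp add: ones_kron_id_def scalar_prod_def atLeast0LessThan row_def sum_lessThan_mult_split)
  also have "\<dots> = (\<Sum>i<N. \<Sum>b<d. if b = a then v $ (i * d + a) else 0)"
    by (intro sum.cong refl) auto
  finally show ?thesis using a by (simp add: coord_slice_def scalar_prod_def lessThan_atLeast0)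
qed

lemma smult_mat_mult_vec:
  "M \<in> carrier_mat n n \<Longrightarrow> x \<in> carrier_vec n \<Longrightarrow> (c \<cdot>\<^sub>m M) *\<^sub>v x = c \<cdot>\<^sub>v (M *\<^sub>v x)"
  by (rule eq_vecI) (auto simp: scalar_prod_def sum_distrib_left ac_simps)

lemma kron_id_second_eigenvalue_bounds:
  fixes M :: "real mat"
  assumes M: "M \<in> carrier_mat N N" and sym: "transpose_mat M = M"
    and u: "u \<in> carrier_vec N" "u \<noteq> 0\<^sub>v N" "M *\<^sub>v u = 0\<^sub>v N"
    and \<rho>: "\<rho> = sorted_eigenvalues M ! 1" "0 < \<rho>"
    and x: "x \<in> carrier_vec (N * d)"
  shows "0 \<le> x \<bullet> (kron_id M d *\<^sub>v x)"
    and "(\<And>a. a < d \<Longrightarrow> coord_slice N d x a \<bullet> u = 0) \<Longrightarrow> \<rho> * (x \<bullet> x) \<le> x \<bullet> (kron_id M d *\<^sub>v x)"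
proof -
  note bounds = symmetric_mat_second_eigenvalue_bounds[OF M sym u \<rho> coord_slice_carrier]
  show "0 \<le> x \<bullet> (kron_id M d *\<^sub>v x)"
    unfolding scalar_prod_kron_id_mult_vec[OF M x] by (intro sum_nonneg bounds(1))
  assume "\<And>a. a < d \<Longrightarrow> coord_slice N d x a \<bullet> u = 0"
  hence "(\<Sum>a<d. \<rho> * (coord_slice N d x a \<bullet> coord_slice N d x a))
      \<le> (\<Sum>a<d. coord_slice N d x a \<bullet> (M *\<^sub>v coord_slice N d x a))"
    by (intro sum_mono bounds(2)) auto
  thus "\<rho> * (x \<bullet> x) \<le> x \<bullet> (kron_id M d *\<^sub>v x)"
    unfolding scalar_prod_kron_id_mult_vec[OF M x] scalar_prod_coord_slices[OF x, of x]
    by (simp add: sum_distrib_left)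
qed

lemma coord_slices_eq_0_imp_eq_0:
  assumes x: "x \<in> carrier_vec (N * d)" and slices: "\<And>a. a < d \<Longrightarrow> coord_slice N d x a = 0\<^sub>v N"
  shows "x = 0\<^sub>v (N * d)"
proof (rule eq_vecI)
  fix k assume "k < dim_vec (0\<^sub>v (N * d) :: 'a vec)"
  hence k: "k < N * d" by simp
  hence "0 < d" by (cases d) auto
  hence a: "k mod d < d" and i: "k div d < N" using k by (auto simp: less_mult_imp_div_less)
  have "x $ k = coord_slice N d x (k mod d) $ (k div d)" using i by (simp add: coord_slice_def)
  thus "x $ k = 0\<^sub>v (N * d) $ k" using slices[OF a] i k by simp
qed (use x in simp)

text \<open>Every agent receives the average of all agents' vectors: the orthogonal projection onto the
  column space of 1_N \<otimes> I_d.\<close>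
definition coord_average :: "nat \<Rightarrow> nat \<Rightarrow> real vec \<Rightarrow> real vec" where
  "coord_average N d w = vec (N * d) (\<lambda>k. (coord_slice N d w (k mod d) \<bullet> vec N (\<lambda>_. 1)) / N)"

lemma coord_average_carrier[simp]: "coord_average N d w \<in> carrier_vec (N * d)"
  unfolding coord_average_def by simp

lemma coord_slice_coord_average:
  assumes a: "a < d"
  shows "coord_slice N d (coord_average N d w) a
    = ((coord_slice N d w a \<bullet> vec N (\<lambda>_. 1)) / N) \<cdot>\<^sub>v vec N (\<lambda>_. 1)"
  by (rule eq_vecI) (use a in \<open>auto simp: coord_slice_def coord_average_def index_mult_add_less\<close>)

lemma kron_id_mult_coord_average:
  assumes M: "M \<in> carrier_mat N N" and M1: "M *\<^sub>v vec N (\<lambda>_. 1) = 0\<^sub>v N"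
  shows "kron_id M d *\<^sub>v coord_average N d w = 0\<^sub>v (N * d)"
proof (rule coord_slices_eq_0_imp_eq_0)
  fix a assume a: "a < d"
  show "coord_slice N d (kron_id M d *\<^sub>v coord_average N d w) a = 0\<^sub>v N"
    unfolding coord_slice_kron_id_mult_vec[OF M coord_average_carrier a] coord_slice_coord_average[OF a]
    using M M1 by (auto simp: mult_mat_vec intro!: eq_vecI)
qed (use kron_id_carrier[OF M, of d] in auto)

lemma coord_slice_diff_coord_average_orthogonal:
  assumes w: "w \<in> carrier_vec (N * d)" and a: "a < d" and N: "0 < N"
  shows "coord_slice N d (w - coord_average N d w) a \<bullet> vec N (\<lambda>_. 1) = 0"
proof -
  have "coord_slice N d (w - coord_average N d w) a = coord_slice N d w a - coord_slice N d (coord_average N d w) a"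
    using w a by (intro eq_vecI) (auto simp: coord_slice_def coord_average_def index_mult_add_less)
  thus ?thesis unfolding coord_slice_coord_average[OF a] using N
    by (simp add: minus_scalar_prod_distrib[of _ N] scalar_prod_def sum_subtractf)
qed

lemma scalar_prod_coord_average_eq_0:
  assumes v: "v \<in> carrier_vec (N * d)" and v1: "transpose_mat (ones_kron_id N d) *\<^sub>v v = 0\<^sub>v d"
  shows "v \<bullet> coord_average N d w = 0"
proof -
  have "coord_slice N d v a \<bullet> vec N (\<lambda>_. 1) = 0" if "a < d" for a
    using transpose_ones_kron_id_mult_vec[OF v that] arg_cong[OF v1, of "\<lambda>x. x $ a"] that by simp
  thus ?thesis unfolding scalar_prod_coord_slices[OF coord_average_carrier, of v N d w]
    by (simp add: coord_slice_coord_average scalar_prod_smult_distrib[of _ N])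
qed

section \<open>The resolvent estimate\<close>

lemma scalar_prod_square_bound:
  fixes x y :: "real vec"
  assumes x: "x \<in> carrier_vec n" and y: "y \<in> carrier_vec n"
    and k: "0 \<le> k" and bound: "k * (y \<bullet> y) \<le> x \<bullet> y"
  shows "k\<^sup>2 * (y \<bullet> y) \<le> x \<bullet> x"
proof -
  have "0 \<le> (x - k \<cdot>\<^sub>v y) \<bullet> (x - k \<cdot>\<^sub>v y)" by (rule scalar_prod_self_nonneg)
  also have "\<dots> = x \<bullet> x - 2 * k * (x \<bullet> y) + k\<^sup>2 * (y \<bullet> y)"
    using x y by (simp add: minus_scalar_prod_distrib[of _ n] scalar_prod_minus_distrib[of _ n]
        comm_scalar_prod[of y n x] power2_eq_square algebra_simps)
  finally show ?thesis using mult_left_mono[OF bound, of "2 * k"] k by (simp add: power2_eq_square)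
qed

lemma positive_definite_mat_inverse:
  fixes B :: "real mat"
  assumes B: "B \<in> carrier_mat n n"
    and pos: "\<And>x. x \<in> carrier_vec n \<Longrightarrow> x \<noteq> 0\<^sub>v n \<Longrightarrow> 0 < x \<bullet> (B *\<^sub>v x)"
  obtains B' where "mat_inverse B = Some B'" "B' \<in> carrier_mat n n" "B * B' = 1\<^sub>m n"
proof -
  have "det B \<noteq> 0"
  proof
    assume "det B = 0"
    then obtain x where "x \<in> carrier_vec n" "x \<noteq> 0\<^sub>v n" "B *\<^sub>v x = 0\<^sub>v n"
      using det_0_iff_vec_prod_zero[OF B] by blast
    thus False using pos by fastforce
  qed
  hence unit: "B \<in> Units (ring_mat TYPE(real) n ())" by (rule det_non_zero_imp_unit[OF B])
  obtain B' where "mat_inverse B = Some B'"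
  proof (cases "mat_inverse B")
    case None
    have "B \<notin> Units (ring_mat TYPE(real) n ())" by (rule mat_inverse(1)[OF B None])
    thus ?thesis using unit by contradiction
  qed
  thus ?thesis using that mat_inverse(2)[OF B] by auto
qed

context
  fixes A K :: "real mat" and n :: nat and U :: real and v w p c :: "real vec"
  assumes A: "A \<in> carrier_mat n n" "transpose_mat A = A"
    and K: "K \<in> carrier_mat n n" "transpose_mat K = K"
    and vectors: "p \<in> carrier_vec n" "c \<in> carrier_vec n"
    and w: "w = p + c" and Kc: "K *\<^sub>v c = 0\<^sub>v n" and vc: "v \<bullet> c = 0"
    and solution: "(A + U \<cdot>\<^sub>m K) *\<^sub>v w = v"
begin

lemma resolvent_scalar_prod:
  assumes x: "x \<in> carrier_vec n"
  shows "x \<bullet> v = x \<bullet> (A *\<^sub>v w) + U * (p \<bullet> (K *\<^sub>v x))"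
proof -
  have wn: "w \<in> carrier_vec n" using vectors w by simp
  have "x \<bullet> v = x \<bullet> (A *\<^sub>v w) + U * (x \<bullet> (K *\<^sub>v w))"
    unfolding solution[symmetric] using A K x wn
    by (simp add: add_mult_distrib_mat_vec[of _ n n] smult_mat_mult_vec scalar_prod_add_distrib[of _ n])
  also have "x \<bullet> (K *\<^sub>v w) = p \<bullet> (K *\<^sub>v x)"
  proof -
    have "x \<bullet> (K *\<^sub>v w) = (K *\<^sub>v x) \<bullet> p + (K *\<^sub>v x) \<bullet> c"
      using symmetric_mat_scalar_prod[OF K x wn] K x vectors unfolding w
      by (simp add: scalar_prod_add_distrib[of _ n])
    also have "(K *\<^sub>v x) \<bullet> c = 0"
      using symmetric_mat_scalar_prod[OF K x vectors(2)] Kc x by simp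
    finally show ?thesis using K x vectors by (simp add: comm_scalar_prod[of _ n p])
  qed
  finally show ?thesis .
qed

lemma resolvent_consensus_error_bound:
  assumes A_nonneg: "\<And>x. x \<in> carrier_vec n \<Longrightarrow> 0 \<le> x \<bullet> (A *\<^sub>v x)"
    and K_bound: "\<rho> * (p \<bullet> p) \<le> p \<bullet> (K *\<^sub>v p)" and U: "0 < U" and \<rho>: "0 < \<rho>"
    and v: "v \<in> carrier_vec n"
  shows "(U * \<rho>)\<^sup>2 * (p \<bullet> p) \<le> v \<bullet> v"
proof -
  have wn: "w \<in> carrier_vec n" using vectors w by simp
  have "K *\<^sub>v w = K *\<^sub>v p" unfolding w using K vectors Kc by (simp add: mult_add_distrib_mat_vec[of _ n n])
  hence "w \<bullet> v = w \<bullet> (A *\<^sub>v w) + U * (p \<bullet> (K *\<^sub>v p))"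
    using resolvent_scalar_prod[OF wn] by simp
  moreover have "w \<bullet> v = v \<bullet> p"
    using comm_scalar_prod[OF wn v] scalar_prod_add_distrib[OF v vectors] vc unfolding w by simp
  moreover have "U * (\<rho> * (p \<bullet> p)) \<le> U * (p \<bullet> (K *\<^sub>v p))" using K_bound U by simp
  ultimately have "U * \<rho> * (p \<bullet> p) \<le> v \<bullet> p"
    using A_nonneg[OF wn] by (simp add: mult.assoc)
  thus ?thesis using scalar_prod_square_bound[OF v vectors(1)] U \<rho> by simp
qed

lemma resolvent_energy_bound:
  assumes A_bounds: "\<And>x. x \<in> carrier_vec n \<Longrightarrow> \<mu> * (x \<bullet> x) \<le> x \<bullet> (A *\<^sub>v x) \<and> x \<bullet> (A *\<^sub>v x) \<le> L * (x \<bullet> x)"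
    and \<mu>: "0 \<le> \<mu>" and v: "v \<in> carrier_vec n"
  shows "\<mu> * (w \<bullet> w) \<le> L * (p \<bullet> p)"
proof -
  have wn: "w \<in> carrier_vec n" using vectors w by simp
  have cAw: "c \<bullet> (A *\<^sub>v w) = 0"
    using resolvent_scalar_prod[OF vectors(2)] vc v vectors Kc comm_scalar_prod[of c n v] by simp
  have Aw: "A *\<^sub>v w = A *\<^sub>v p + A *\<^sub>v c" unfolding w using A vectors by (simp add: mult_add_distrib_mat_vec[of _ n n])
  have pAc: "p \<bullet> (A *\<^sub>v c) = - (c \<bullet> (A *\<^sub>v c))"
    using cAw symmetric_mat_scalar_prod[OF A vectors(2,1)] comm_scalar_prod[of "A *\<^sub>v c" n p] A vectors
    unfolding Aw by (simp add: scalar_prod_add_distrib[of _ n])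
  have "w \<bullet> (A *\<^sub>v w) = p \<bullet> (A *\<^sub>v w)"
    using add_scalar_prod_distrib[OF vectors mult_mat_vec_carrier[OF A(1) wn]] cAw w by simp
  also have "\<dots> = p \<bullet> (A *\<^sub>v p) + p \<bullet> (A *\<^sub>v c)"
    unfolding Aw using A vectors by (simp add: scalar_prod_add_distrib[of _ n])
  also have "\<dots> \<le> L * (p \<bullet> p)"
    using pAc A_bounds[OF vectors(1)] A_bounds[OF vectors(2)] \<mu> scalar_prod_self_nonneg[of c]
    by (smt (verit) mult_nonneg_nonneg)
  finally show ?thesis using A_bounds[OF wn] by linarith
qed

lemma resolvent_norm_bound:
  assumes A_bounds: "\<And>x. x \<in> carrier_vec n \<Longrightarrow> \<mu> * (x \<bullet> x) \<le> x \<bullet> (A *\<^sub>v x) \<and> x \<bullet> (A *\<^sub>v x) \<le> L * (x \<bullet> x)"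
    and K_bound: "\<rho> * (p \<bullet> p) \<le> p \<bullet> (K *\<^sub>v p)"
    and \<mu>: "0 < \<mu>" "\<mu> \<le> L" and U: "0 < U" and \<rho>: "0 < \<rho>" and v: "v \<in> carrier_vec n"
  shows "w \<bullet> w \<le> ((1 / U) * (L / (\<mu> * \<rho>)))\<^sup>2 * (v \<bullet> v)"
proof -
  have A_nonneg: "0 \<le> x \<bullet> (A *\<^sub>v x)" if "x \<in> carrier_vec n" for x
    using A_bounds[OF that] \<mu>(1) scalar_prod_self_nonneg[of x] by (meson mult_nonneg_nonneg order.trans less_imp_le)
  have k: "0 < (U * \<rho>)\<^sup>2" using U \<rho> by simp
  have "(U * \<rho>)\<^sup>2 * (\<mu> * (w \<bullet> w)) \<le> (U * \<rho>)\<^sup>2 * (L * (p \<bullet> p))"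
    using resolvent_energy_bound[OF A_bounds _ v] \<mu> k by simp
  also have "\<dots> = L * ((U * \<rho>)\<^sup>2 * (p \<bullet> p))" by simp
  also have "\<dots> \<le> L * (v \<bullet> v)"
    using resolvent_consensus_error_bound[OF A_nonneg K_bound U \<rho> v] \<mu> by simp
  finally have "w \<bullet> w \<le> (L / \<mu>) * (v \<bullet> v) / (U * \<rho>)\<^sup>2" using \<mu> k by (simp add: field_simps)
  also have "\<dots> \<le> (L / \<mu>)\<^sup>2 * (v \<bullet> v) / (U * \<rho>)\<^sup>2"
  proof (intro divide_right_mono mult_right_mono)
    have "1 \<le> L / \<mu>" using \<mu> by simp
    thus "L / \<mu> \<le> (L / \<mu>)\<^sup>2" using mult_left_mono[of 1 "L / \<mu>" "L / \<mu>"] by (simp add: power2_eq_square)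
  qed (use scalar_prod_self_nonneg[of v] in simp_all)
  finally show ?thesis by (simp add: power2_eq_square field_simps)
qed

end

lemma euclid_norm_le:
  assumes "x \<bullet> x \<le> r\<^sup>2 * (v \<bullet> v)" and "0 \<le> r"
  shows "euclid_norm x \<le> r * euclid_norm v"
  unfolding euclid_norm_def using real_sqrt_le_mono[OF assms(1)] assms(2) by (simp add: real_sqrt_mult)

lemma symmetric_resolvent_norm_bound:
  fixes A K :: "real mat"
  assumes A: "A \<in> carrier_mat n n" "transpose_mat A = A"
    and K: "K \<in> carrier_mat n n" "transpose_mat K = K"
    and A_bounds: "\<And>x. x \<in> carrier_vec n \<Longrightarrow> \<mu> * (x \<bullet> x) \<le> x \<bullet> (A *\<^sub>v x) \<and> x \<bullet> (A *\<^sub>v x) \<le> L * (x \<bullet> x)"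
    and K_nonneg: "\<And>x. x \<in> carrier_vec n \<Longrightarrow> 0 \<le> x \<bullet> (K *\<^sub>v x)"
    and \<mu>: "0 < \<mu>" "\<mu> \<le> L" and U: "0 < U" and \<rho>: "0 < \<rho>" and v: "v \<in> carrier_vec n"
    and c: "\<And>w. w \<in> carrier_vec n \<Longrightarrow> c w \<in> carrier_vec n \<and> K *\<^sub>v c w = 0\<^sub>v n \<and> v \<bullet> c w = 0 \<and>
      \<rho> * ((w - c w) \<bullet> (w - c w)) \<le> (w - c w) \<bullet> (K *\<^sub>v (w - c w))"
  shows "euclid_norm (the (mat_inverse (A + U \<cdot>\<^sub>m K)) *\<^sub>v v) \<le> (1 / U) * (L / (\<mu> * \<rho>)) * euclid_norm v"
proof -
  define B where "B = A + U \<cdot>\<^sub>m K"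
  have "0 < x \<bullet> (B *\<^sub>v x)" if x: "x \<in> carrier_vec n" "x \<noteq> 0\<^sub>v n" for x
  proof -
    have "0 < \<mu> * (x \<bullet> x)"
      using \<mu> x scalar_prod_self_nonneg[of x] scalar_prod_self_eq_0_iff[OF x(1)] by force
    moreover have "x \<bullet> (B *\<^sub>v x) = x \<bullet> (A *\<^sub>v x) + U * (x \<bullet> (K *\<^sub>v x))"
      unfolding B_def using A K x
      by (simp add: add_mult_distrib_mat_vec[of _ n n] smult_mat_mult_vec scalar_prod_add_distrib[of _ n])
    ultimately show ?thesis using A_bounds[OF x(1)] K_nonneg[OF x(1)] U by (smt (verit) mult_nonneg_nonneg)
  qed
  then obtain B' where inv: "mat_inverse B = Some B'" and B': "B' \<in> carrier_mat n n"
    and BB': "B * B' = 1\<^sub>m n"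
    using positive_definite_mat_inverse[of B n] A K unfolding B_def by auto
  define w where "w = B' *\<^sub>v v"
  have w: "w \<in> carrier_vec n" unfolding w_def using B' v by simp
  have Bw: "(A + U \<cdot>\<^sub>m K) *\<^sub>v w = v" unfolding w_def using BB' B' A K v
    by (simp add: B_def assoc_mult_mat_vec[symmetric, of _ n n _ n])
  have wpc: "w = (w - c w) + c w" using w c[OF w] by (auto intro!: eq_vecI)
  from resolvent_norm_bound[OF A K _ _ wpc _ _ Bw A_bounds _ \<mu> U \<rho> v] c[OF w] w
  have "w \<bullet> w \<le> ((1 / U) * (L / (\<mu> * \<rho>)))\<^sup>2 * (v \<bullet> v)" by auto
  hence "euclid_norm w \<le> (1 / U) * (L / (\<mu> * \<rho>)) * euclid_norm v"
    by (rule euclid_norm_le) (use U \<mu> \<rho> in simp)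
  thus ?thesis using inv unfolding w_def B_def by simp
qed

theorem lemma4:
  fixes N d :: nat and Lap A :: "real mat" and \<mu> Lmax U \<rho>2 :: real and v :: "real vec"
  assumes "2 \<le> N"
    and "laplacian_mat N Lap"
    and "\<rho>2 = sorted_eigenvalues Lap ! 1"
    and "\<rho>2 > 0"
    and "A \<in> carrier_mat (N * d) (N * d)"
    and "transpose_mat A = A"
    and "\<And>ev. eigenvalue A ev \<Longrightarrow> \<mu> \<le> ev \<and> ev \<le> Lmax"
    and "0 < \<mu>" and "\<mu> \<le> Lmax"
    and "U > 0"
    and "v \<in> carrier_vec (N * d)"
    and "transpose_mat (ones_kron_id N d) *\<^sub>v v = 0\<^sub>v d"
  shows "euclid_norm (the (mat_inverse (A + U \<cdot>\<^sub>m kron_id Lap d)) *\<^sub>v v)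
           \<le> (1 / U) * (Lmax / (\<mu> * \<rho>2)) * euclid_norm v"
proof (rule symmetric_resolvent_norm_bound)
  have Lap: "Lap \<in> carrier_mat N N" "transpose_mat Lap = Lap"
    and Lap1: "Lap *\<^sub>v vec N (\<lambda>_. 1) = 0\<^sub>v N" using assms(2) unfolding laplacian_mat_def by auto
  have ones: "vec N (\<lambda>_. 1) \<in> carrier_vec N" "vec N (\<lambda>_. 1) \<noteq> (0\<^sub>v N :: real vec)"
    using assms(1) by (auto simp: vec_eq_iff intro!: exI[of _ 0])
  note K_bounds = kron_id_second_eigenvalue_bounds[OF Lap ones Lap1 assms(3,4)]
  show "kron_id Lap d \<in> carrier_mat (N * d) (N * d)" "transpose_mat (kron_id Lap d) = kron_id Lap d"
    using kron_id_carrier[OF Lap(1)] transpose_kron_id[OF Lap] by auto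
  show "\<And>x. x \<in> carrier_vec (N * d) \<Longrightarrow> 0 \<le> x \<bullet> (kron_id Lap d *\<^sub>v x)" by (rule K_bounds(1))
  show "\<mu> * (x \<bullet> x) \<le> x \<bullet> (A *\<^sub>v x) \<and> x \<bullet> (A *\<^sub>v x) \<le> Lmax * (x \<bullet> x)"
    if "x \<in> carrier_vec (N * d)" for x
    using symmetric_mat_quadratic_form_bounds[OF assms(5,6,7) that] by blast
  fix w :: "real vec" assume w: "w \<in> carrier_vec (N * d)"
  show "coord_average N d w \<in> carrier_vec (N * d) \<and> kron_id Lap d *\<^sub>v coord_average N d w = 0\<^sub>v (N * d) \<and>
      v \<bullet> coord_average N d w = 0 \<and> \<rho>2 * ((w - coord_average N d w) \<bullet> (w - coord_average N d w))
        \<le> (w - coord_average N d w) \<bullet> (kron_id Lap d *\<^sub>v (w - coord_average N d w))"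
    using kron_id_mult_coord_average[OF Lap(1) Lap1] scalar_prod_coord_average_eq_0[OF assms(11,12)]
      K_bounds(2) coord_slice_diff_coord_average_orthogonal[OF w] assms(1) w by simp
qed (use assms in auto)

end
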